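(* Let $w\in W^{2,2}(S^1)$ with $w\geq 1$ and $\int_{S^1}(w^2-w'^2)\,dt=0$. Then there exists a family $(w_\varepsilon)_{\varepsilon>0}\subset W^{2,\infty}(S^1)$ such that $w_\varepsilon\geq 1$ and $\int_{S^1}(w_\varepsilon^2-w_\varepsilon'^2)\,dt=0$ for all $\varepsilon$, and $w_\varepsilon\to w$ in $W^{2,2}(S^1)$ as $\varepsilon\to 0$.
   Context: $S^1=\mathbb{R}/(2\pi\mathbb{Z})$; functions on $S^1$ are identified with $2\pi$-periodic functions on $\mathbb{R}$, and $W^{k,p}(S^1)$ consists of $2\pi$-periodic functions in $W^{k,p}_{loc}(\mathbb{R})$, normed by the $W^{k,p}$ norm on $[-\pi,\pi)$. *)

theory Defs
  imports "HOL-Analysis.Analysis"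
begin

text \<open>Functions on S^1 = 2pi-periodic functions on the reals.\<close>
definition periodic_2pi :: "(real \<Rightarrow> real) \<Rightarrow> bool" where
  "periodic_2pi f \<longleftrightarrow> (\<forall>x. f (x + 2*pi) = f x)"

text \<open>g is a weak (L^1_loc) derivative of f, with f its absolutely continuous
  representative: f b - f a = integral of g over [a,b] for all a <= b.\<close>
definition weak_deriv :: "(real \<Rightarrow> real) \<Rightarrow> (real \<Rightarrow> real) \<Rightarrow> bool" where
  "weak_deriv f g \<longleftrightarrow>
     (\<forall>a b. a \<le> b \<longrightarrow> g absolutely_integrable_on {a..b} \<and> (g has_integral (f b - f a)) {a..b})"

text \<open>W^{2,2}(S^1) (continuous representative): periodic w with periodic weak derivatives
  w1, w2, and w2 square integrable over a period.\<close>
definition W22_S1 :: "(real \<Rightarrow> real) \<Rightarrow> bool" where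
  "W22_S1 w \<longleftrightarrow> periodic_2pi w \<and>
     (\<exists>w1 w2. periodic_2pi w1 \<and> periodic_2pi w2 \<and> weak_deriv w w1 \<and> weak_deriv w1 w2 \<and>
        (\<lambda>x. (w2 x)\<^sup>2) integrable_on {-pi..pi})"

text \<open>W^{2,\<infinity>}(S^1): second weak derivative bounded (a representative may be chosen
  bounded everywhere, as it is only determined a.e.).\<close>
definition W2inf_S1 :: "(real \<Rightarrow> real) \<Rightarrow> bool" where
  "W2inf_S1 w \<longleftrightarrow> periodic_2pi w \<and>
     (\<exists>w1 w2. periodic_2pi w1 \<and> periodic_2pi w2 \<and> weak_deriv w w1 \<and> weak_deriv w1 w2 \<and>
        (\<exists>C. \<forall>x. \<bar>w2 x\<bar> \<le> C))"

text \<open>Second weak derivative (some representative; determined up to null sets).\<close>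
definition wderiv2 :: "(real \<Rightarrow> real) \<Rightarrow> real \<Rightarrow> real" where
  "wderiv2 f = (SOME g. weak_deriv (deriv f) g)"

definition W22_norm :: "(real \<Rightarrow> real) \<Rightarrow> real" where
  "W22_norm f = sqrt (integral {-pi..pi} (\<lambda>x. (f x)\<^sup>2 + (deriv f x)\<^sup>2 + (wderiv2 f x)\<^sup>2))"

end

theory Submission
  imports Defs
begin

text \<open>Truncate \<open>w''\<close> at height \<open>N\<close> and subtract the mean of the truncation error; integrating
  twice by periodic primitives gives \<open>v\<^sub>N\<close> with bounded second derivative. By dominated
  convergence the truncation error tends to \<open>0\<close> in \<open>L\<^sup>1\<close> and \<open>L\<^sup>2\<close>, so \<open>v\<^sub>N \<rightarrow> w\<close> and
  \<open>v\<^sub>N' \<rightarrow> w'\<close> uniformly and \<open>v\<^sub>N'' \<rightarrow> w''\<close> in \<open>L\<^sup>2\<close>. The side conditions are then restored: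
  adding the small root \<open>\<gamma>\<^sub>N\<close> of the quadratic \<open>\<integral> (v\<^sub>N + \<gamma>)\<^sup>2 - v\<^sub>N'\<^sup>2 = 0\<close>, which is
  controlled by the constraint defect of \<open>v\<^sub>N\<close>, fixes the constraint, and dividing by \<open>1 - s\<^sub>N\<close>,
  where \<open>s\<^sub>N\<close> bounds \<open>\<bar>v\<^sub>N + \<gamma>\<^sub>N - w\<bar>\<close>, lifts the function above \<open>1\<close> without breaking
  the homogeneous constraint. These \<open>u\<^sub>N\<close> tend to \<open>w\<close> in \<open>W\<^sup>2\<^sup>,\<^sup>2\<close>; take \<open>N = 1/\<epsilon>\<close>.\<close>

section \<open>Weak derivatives\<close>

definition primitive :: "(real \<Rightarrow> real) \<Rightarrow> real \<Rightarrow> real" where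
  "primitive f t = (if 0 \<le> t then integral {0..t} f else - integral {t..0} f)"

lemma has_integral_primitive:
  assumes f: "\<And>a b. f integrable_on {a..b}" and "a \<le> b"
  shows "(f has_integral (primitive f b - primitive f a)) {a..b}"
proof -
  have "integral {a..b} f = primitive f b - primitive f a"
  proof (cases "0 \<le> a")
    case True
    then show ?thesis
      using Henstock_Kurzweil_Integration.integral_combine[OF _ \<open>a \<le> b\<close> f, of 0] \<open>a \<le> b\<close>
      by (simp add: primitive_def)
  next
    case False
    then show ?thesis
      using Henstock_Kurzweil_Integration.integral_combine[OF \<open>a \<le> b\<close> _ f, of 0]
        Henstock_Kurzweil_Integration.integral_combine[of a 0 b f] f
      by (cases "b \<le> 0") (simp_all add: primitive_def)
  qed
  then show ?thesis
    using integrable_integral[OF f] by metis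
qed

lemma weak_deriv_primitive:
  assumes "\<And>a b. f absolutely_integrable_on {a..b}"
  shows "weak_deriv (primitive f) f"
  using assms has_integral_primitive set_lebesgue_integral_eq_integral(1)
  unfolding weak_deriv_def by blast

lemma weak_deriv_integral:
  assumes "weak_deriv f g" and "a \<le> b"
  shows "integral {a..b} g = f b - f a"
proof -
  have "(g has_integral (f b - f a)) {a..b}"
    using assms unfolding weak_deriv_def by blast
  then show ?thesis
    by (rule integral_unique)
qed

lemma weak_deriv_continuous_on:
  assumes "weak_deriv f g"
  shows "continuous_on S f"
proof -
  have "isCont f x" for x
  proof -
    have "(g has_integral (f (x+1) - f (x-1))) {x-1..x+1}"
      using assms unfolding weak_deriv_def by simp
    then have g: "g integrable_on {x-1..x+1}"
      by blast
    have eq: "f (x-1) + integral {x-1..y} g = f y" if "y \<in> {x-1..x+1}" for y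
      using weak_deriv_integral[OF assms, of "x-1" y] that by simp
    have "continuous_on {x-1..x+1} (\<lambda>y. f (x-1) + integral {x-1..y} g)"
      by (intro continuous_intros indefinite_integral_continuous_1 g)
    then have "continuous_on {x-1..x+1} f"
      by (rule continuous_on_eq[OF _ eq])
    then show ?thesis
      by (rule continuous_on_interior) simp
  qed
  then show ?thesis
    by (simp add: continuous_at_imp_continuous_on)
qed

lemma weak_deriv_has_real_derivative:
  assumes "weak_deriv f g" and "continuous_on UNIV g"
  shows "(f has_real_derivative g x) (at x)"
proof -
  have "((\<lambda>y. integral {x-1..y} g) has_real_derivative g x) (at x within {x-1..x+1})"
    using assms(2) by (intro integral_has_real_derivative) (auto intro: continuous_on_subset)
  then have "((\<lambda>y. f (x-1) + integral {x-1..y} g) has_real_derivative g x) (at x)"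
    using at_within_interior[of x "{x-1..x+1}"] by (auto intro!: derivative_eq_intros)
  then show ?thesis
  proof (rule has_field_derivative_transform_within_open[where S="{x-1<..<x+1}"])
    show "f (x-1) + integral {x-1..y} g = f y" if "y \<in> {x-1<..<x+1}" for y
      using weak_deriv_integral[OF assms(1), of "x-1" y] that by simp
  qed auto
qed

lemma weak_deriv_deriv_eq:
  assumes "weak_deriv f g" and "continuous_on UNIV g"
  shows "deriv f = g"
  using weak_deriv_has_real_derivative[OF assms] DERIV_imp_deriv by blast

text \<open>Two weak derivatives have the same integral over every interval, so by the
  Lebesgue differentiation theorem they agree almost everywhere.\<close>
lemma weak_deriv_unique:
  assumes "weak_deriv f g" and "weak_deriv f h"
  shows "negligible {x. g x \<noteq> h x}"
proof -
  define D where "D x = g x - h x" for x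
  have D: "(D has_integral 0) {a..b}" if "a \<le> b" for a b
  proof -
    have "(g has_integral (f b - f a)) {a..b}" "(h has_integral (f b - f a)) {a..b}"
      using assms that unfolding weak_deriv_def by auto
    from has_integral_diff[OF this] show ?thesis
      unfolding D_def by simp
  qed
  have "D integrable_on cbox a b" for a b
    using D[of a b] by (cases "a \<le> b") (auto simp: cbox_interval)
  then obtain N where "negligible N" and N:
    "\<And>x e. x \<notin> N \<Longrightarrow> 0 < e \<Longrightarrow> \<exists>d>0. \<forall>k. 0 < k \<and> k < d \<longrightarrow>
        norm (integral (cbox x (x + k *\<^sub>R One)) D /\<^sub>R k ^ DIM(real) - D x) < e"
    by (rule integrable_ccontinuous_explicit) blast
  have "D x = 0" if "x \<notin> N" for x
  proof (rule ccontr)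
    assume "D x \<noteq> 0"
    then have "\<exists>d>0. \<forall>k. 0 < k \<and> k < d \<longrightarrow> norm (integral {x..x+k} D /\<^sub>R k - D x) < \<bar>D x\<bar>"
      using N[OF that, of "\<bar>D x\<bar>"] by (simp add: cbox_interval)
    then obtain d where "d > 0" and
      d: "\<forall>k. 0 < k \<and> k < d \<longrightarrow> norm (integral {x..x+k} D /\<^sub>R k - D x) < \<bar>D x\<bar>"
      by blast
    have "norm (integral {x..x + d/2} D /\<^sub>R (d/2) - D x) < \<bar>D x\<bar>"
      using d[rule_format, of "d/2"] \<open>d > 0\<close> by linarith
    moreover have "integral {x..x + d/2} D = 0"
      using D[of x "x + d/2"] \<open>d > 0\<close> by (simp add: integral_unique)
    ultimately show False
      by simp
  qed
  then have "{x. g x \<noteq> h x} \<subseteq> N"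
    unfolding D_def by auto
  then show ?thesis
    using \<open>negligible N\<close> negligible_subset by blast
qed

lemma weak_deriv_add:
  assumes f: "weak_deriv f f'" and g: "weak_deriv g g'"
  shows "weak_deriv (\<lambda>x. f x + g x) (\<lambda>x. f' x + g' x)"
  unfolding weak_deriv_def
proof (intro allI impI conjI)
  fix a b :: real assume "a \<le> b"
  then have f': "f' absolutely_integrable_on {a..b}" "(f' has_integral (f b - f a)) {a..b}"
    and g': "g' absolutely_integrable_on {a..b}" "(g' has_integral (g b - g a)) {a..b}"
    using f g by (simp_all add: weak_deriv_def)
  show "(\<lambda>x. f' x + g' x) absolutely_integrable_on {a..b}"
    using set_integral_add(1)[OF f'(1) g'(1)] .
  show "((\<lambda>x. f' x + g' x) has_integral (f b + g b - (f a + g a))) {a..b}"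
    using has_integral_add[OF f'(2) g'(2)] by (simp add: algebra_simps)
qed

lemma weak_deriv_cmult:
  assumes f: "weak_deriv f f'"
  shows "weak_deriv (\<lambda>x. c * f x) (\<lambda>x. c * f' x)"
  unfolding weak_deriv_def
proof (intro allI impI conjI)
  fix a b :: real assume "a \<le> b"
  then have f': "f' absolutely_integrable_on {a..b}" "(f' has_integral (f b - f a)) {a..b}"
    using f by (simp_all add: weak_deriv_def)
  show "(\<lambda>x. c * f' x) absolutely_integrable_on {a..b}"
    using set_integrable_mult_right[OF f'(1)] by simp
  show "((\<lambda>x. c * f' x) has_integral (c * f b - c * f a)) {a..b}"
    using has_integral_mult_right[OF f'(2), of c] by (simp add: right_diff_distrib)
qed

lemma weak_deriv_diff:
  assumes "weak_deriv f f'" and "weak_deriv g g'"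
  shows "weak_deriv (\<lambda>x. f x - g x) (\<lambda>x. f' x - g' x)"
  using weak_deriv_add[OF assms(1) weak_deriv_cmult[OF assms(2), of "-1"]] by simp

lemma weak_deriv_add_const:
  assumes "weak_deriv f f'"
  shows "weak_deriv (\<lambda>x. f x + c) f'"
  using assms unfolding weak_deriv_def by simp

section \<open>Primitives of periodic functions\<close>

lemma periodic_2pi_add_multiple:
  assumes "periodic_2pi f"
  shows "f (x + 2*pi * of_int k) = f x"
proof -
  have nat: "f (y + 2*pi*real n) = f y" for y n
  proof (induction n)
    case (Suc n)
    have "f (y + 2*pi*real (Suc n)) = f ((y + 2*pi*real n) + 2*pi)"
      by (simp add: algebra_simps)
    then show ?case
      using Suc assms by (simp add: periodic_2pi_def)
  qed simp
  show ?thesis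
  proof (cases "0 \<le> k")
    case True
    then show ?thesis
      using nat[of x "nat k"] by simp
  next
    case False
    then show ?thesis
      using nat[of "x + 2*pi * of_int k" "nat (-k)"] by simp
  qed
qed

lemma periodic_2pi_reduce:
  assumes "periodic_2pi f"
  obtains y where "y \<in> {-pi..pi}" and "f x = f y"
proof
  define k where "k = \<lfloor>(x + pi) / (2*pi)\<rfloor>"
  have "of_int k \<le> (x + pi) / (2*pi)" "(x + pi) / (2*pi) < of_int k + 1"
    unfolding k_def by linarith+
  then show "x - 2*pi * of_int k \<in> {-pi..pi}"
    by (auto simp: field_simps)
  show "f x = f (x - 2*pi * of_int k)"
    using periodic_2pi_add_multiple[OF assms, of _ "-k"] by simp
qed

lemma periodic_2pi_bounded:
  assumes "periodic_2pi f" and "continuous_on {-pi..pi} f"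
  obtains B where "\<And>x. \<bar>f x\<bar> \<le> B"
proof -
  obtain B where "\<And>x. x \<in> {-pi..pi} \<Longrightarrow> norm (f x) \<le> B"
    using continuous_on_compact_bound[OF compact_Icc assms(2)] by blast
  then have "\<bar>f x\<bar> \<le> B" for x
    using periodic_2pi_reduce[OF assms(1), of x] by (metis real_norm_def)
  then show ?thesis
    using that by blast
qed

lemma periodic_2pi_primitive:
  assumes f: "\<And>a b. f integrable_on {a..b}" and "periodic_2pi f"
    and "integral {-pi..pi} f = 0"
  shows "periodic_2pi (primitive f)"
proof -
  have translate: "primitive f (b + 2*pi) - primitive f (a + 2*pi) = primitive f b - primitive f a"
    if "a \<le> b" for a b
  proof -
    have "(f has_integral (primitive f (b + 2*pi) - primitive f (a + 2*pi))) {a + 2*pi..b + 2*pi}"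
      using has_integral_primitive[OF f] that by simp
    then have "((\<lambda>x. f (x + 2*pi)) has_integral (primitive f (b + 2*pi) - primitive f (a + 2*pi))) {a..b}"
      using has_integral_shift_real_ivl[of f _ "a + 2*pi" "b + 2*pi" "2*pi"] by simp
    then have "(f has_integral (primitive f (b + 2*pi) - primitive f (a + 2*pi))) {a..b}"
      using \<open>periodic_2pi f\<close> by (simp add: periodic_2pi_def)
    then show ?thesis
      using has_integral_unique has_integral_primitive[OF f that] by blast
  qed
  have "primitive f (t + 2*pi) - primitive f t = primitive f pi - primitive f (-pi)" for t
    using translate[of t "-pi"] translate[of "-pi" t] by (cases "t \<le> -pi") auto
  moreover have "primitive f pi - primitive f (-pi) = 0"
    using has_integral_primitive[OF f, of "-pi" pi] assms(3) by (simp add: integral_unique)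
  ultimately show ?thesis
    unfolding periodic_2pi_def by simp
qed

lemma abs_primitive_le:
  assumes "periodic_2pi (primitive f)" and "f absolutely_integrable_on {-pi..pi}"
  shows "\<bar>primitive f t\<bar> \<le> integral {-pi..pi} (\<lambda>x. \<bar>f x\<bar>)"
proof -
  have f: "f integrable_on {-pi..pi}" and abs_f: "(\<lambda>x. \<bar>f x\<bar>) integrable_on {-pi..pi}"
    using assms(2) by (auto simp: absolutely_integrable_on_def)
  have "\<bar>integral {c..d} f\<bar> \<le> integral {-pi..pi} (\<lambda>x. \<bar>f x\<bar>)"
    if "-pi \<le> c" "d \<le> pi" for c d
  proof -
    have sub: "{c..d} \<subseteq> {-pi..pi}"
      using that by auto
    have "\<bar>integral {c..d} f\<bar> \<le> integral {c..d} (\<lambda>x. \<bar>f x\<bar>)"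
      using integral_norm_bound_integral[OF integrable_on_subinterval[OF f sub]
          integrable_on_subinterval[OF abs_f sub]] by simp
    also have "\<dots> \<le> integral {-pi..pi} (\<lambda>x. \<bar>f x\<bar>)"
      using integral_subset_le[OF sub integrable_on_subinterval[OF abs_f sub] abs_f] by simp
    finally show ?thesis .
  qed
  moreover obtain y where "y \<in> {-pi..pi}" and "primitive f t = primitive f y"
    using periodic_2pi_reduce[OF assms(1)] .
  ultimately show ?thesis
    by (auto simp: primitive_def)
qed

definition centered_primitive :: "(real \<Rightarrow> real) \<Rightarrow> real \<Rightarrow> real" where
  "centered_primitive f t = primitive f t - integral {-pi..pi} (primitive f) / (2*pi)"

definition second_primitive :: "(real \<Rightarrow> real) \<Rightarrow> real \<Rightarrow> real" where
  "second_primitive f = primitive (centered_primitive f)"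

context
  fixes f :: "real \<Rightarrow> real"
  assumes f_periodic: "periodic_2pi f"
    and f_integrable: "\<And>a b. f absolutely_integrable_on {a..b}"
    and f_mean_zero: "integral {-pi..pi} f = 0"
begin

lemma weak_deriv_centered_primitive: "weak_deriv (centered_primitive f) f"
  using weak_deriv_add_const[OF weak_deriv_primitive[OF f_integrable],
      of "- (integral {-pi..pi} (primitive f) / (2*pi))"]
  unfolding centered_primitive_def[abs_def] by simp

lemma continuous_on_centered_primitive: "continuous_on S (centered_primitive f)"
  by (rule weak_deriv_continuous_on[OF weak_deriv_centered_primitive])

lemma periodic_primitive: "periodic_2pi (primitive f)"
  using f_integrable f_periodic f_mean_zero
  by (intro periodic_2pi_primitive) (auto simp: absolutely_integrable_on_def)

lemma periodic_centered_primitive: "periodic_2pi (centered_primitive f)"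
  using periodic_primitive by (simp add: periodic_2pi_def centered_primitive_def)

lemma abs_centered_primitive_le:
  "\<bar>centered_primitive f t\<bar> \<le> 2 * integral {-pi..pi} (\<lambda>x. \<bar>f x\<bar>)"
proof -
  let ?m = "integral {-pi..pi} (\<lambda>x. \<bar>f x\<bar>)"
  have bound: "\<bar>primitive f t\<bar> \<le> ?m" for t
    by (rule abs_primitive_le[OF periodic_primitive f_integrable])
  have "continuous_on {-pi..pi} (primitive f)"
    by (rule weak_deriv_continuous_on[OF weak_deriv_primitive[OF f_integrable]])
  then have "\<bar>integral {-pi..pi} (primitive f)\<bar> \<le> ?m * (2*pi)"
    using integral_bound[of "-pi" pi "primitive f" ?m] bound by simp
  then have "\<bar>integral {-pi..pi} (primitive f) / (2*pi)\<bar> \<le> ?m"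
    by (simp add: abs_divide pos_divide_le_eq)
  then show ?thesis
    using bound[of t] abs_triangle_ineq4[of "primitive f t" "integral {-pi..pi} (primitive f) / (2*pi)"]
    unfolding centered_primitive_def by linarith
qed

lemma weak_deriv_second_primitive: "weak_deriv (second_primitive f) (centered_primitive f)"
  unfolding second_primitive_def
  by (intro weak_deriv_primitive absolutely_integrable_continuous_real continuous_on_centered_primitive)

lemma periodic_second_primitive: "periodic_2pi (second_primitive f)"
proof -
  have "integral {-pi..pi} (centered_primitive f) = 0"
    using continuous_on_centered_primitive[of "{-pi..pi}"]
    unfolding centered_primitive_def[abs_def]
    by (subst integral_diff) (auto intro: integrable_continuous_interval weak_deriv_continuous_on weak_deriv_primitive f_integrable)
  then show ?thesis
    unfolding second_primitive_def
    by (intro periodic_2pi_primitive periodic_centered_primitive integrable_continuous_interval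
        continuous_on_centered_primitive)
qed

lemma abs_second_primitive_le:
  "\<bar>second_primitive f t\<bar> \<le> 4 * pi * integral {-pi..pi} (\<lambda>x. \<bar>f x\<bar>)"
proof -
  let ?m = "integral {-pi..pi} (\<lambda>x. \<bar>f x\<bar>)"
  have "\<bar>second_primitive f t\<bar> \<le> integral {-pi..pi} (\<lambda>x. \<bar>centered_primitive f x\<bar>)"
    unfolding second_primitive_def
    by (intro abs_primitive_le periodic_second_primitive[unfolded second_primitive_def]
        absolutely_integrable_continuous_real continuous_on_centered_primitive)
  also have "\<dots> \<le> integral {-pi..pi} (\<lambda>x. 2 * ?m)"
    by (intro integral_le abs_centered_primitive_le integrable_continuous_interval continuous_intros
        continuous_on_centered_primitive)
  finally show ?thesis
    by simp
qed

end

section \<open>Truncating the second derivative\<close>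

lemma integral_tendsto_zero_dominated_at_top:
  fixes F :: "real \<Rightarrow> real \<Rightarrow> real"
  assumes h: "h integrable_on S"
    and F: "\<And>N. 0 \<le> N \<Longrightarrow> F N integrable_on S"
    and bound: "\<And>N x. 0 \<le> N \<Longrightarrow> x \<in> S \<Longrightarrow> \<bar>F N x\<bar> \<le> h x"
    and lim: "\<And>x. x \<in> S \<Longrightarrow> ((\<lambda>N. F N x) \<longlongrightarrow> 0) at_top"
  shows "((\<lambda>N. integral S (F N)) \<longlongrightarrow> 0) at_top"
proof (rule tendsto_at_topI_sequentially)
  fix X :: "nat \<Rightarrow> real"
  assume X: "filterlim X at_top sequentially"
  then have "\<forall>\<^sub>F n in sequentially. 0 \<le> X n"
    unfolding filterlim_at_top by blast
  then obtain n0 where n0: "\<And>n. n0 \<le> n \<Longrightarrow> 0 \<le> X n"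
    unfolding eventually_sequentially by blast
  have "(\<lambda>n. integral S (F (X (n + n0)))) \<longlonglongrightarrow> integral S (\<lambda>x. 0)"
  proof (rule dominated_convergence(2)[OF _ h])
    show "F (X (n + n0)) integrable_on S" for n
      using F n0 by simp
    show "norm (F (X (n + n0)) x) \<le> h x" if "x \<in> S" for n x
      using bound n0 that by simp
    show "(\<lambda>n. F (X (n + n0)) x) \<longlonglongrightarrow> 0" if "x \<in> S" for x
      using LIMSEQ_ignore_initial_segment[OF filterlim_compose[OF lim[OF that] X]] .
  qed
  then have "(\<lambda>n. integral S (F (X (n + n0)))) \<longlonglongrightarrow> 0"
    by simp
  then show "(\<lambda>n. integral S (F (X n))) \<longlonglongrightarrow> 0"
    by (rule LIMSEQ_offset)
qed

lemma square_integrable_lincomb: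
  fixes f g :: "real \<Rightarrow> real"
  assumes S: "S \<in> sets lebesgue"
    and meas: "f \<in> borel_measurable (lebesgue_on S)" "g \<in> borel_measurable (lebesgue_on S)"
    and sq: "(\<lambda>x. (f x)\<^sup>2) integrable_on S" "(\<lambda>x. (g x)\<^sup>2) integrable_on S"
  shows "(\<lambda>x. (a * f x + b * g x)\<^sup>2) integrable_on S"
    and "integral S (\<lambda>x. (a * f x + b * g x)\<^sup>2)
           \<le> 2 * a\<^sup>2 * integral S (\<lambda>x. (f x)\<^sup>2) + 2 * b\<^sup>2 * integral S (\<lambda>x. (g x)\<^sup>2)"
proof -
  define B where "B x = 2 * a\<^sup>2 * (f x)\<^sup>2 + 2 * b\<^sup>2 * (g x)\<^sup>2" for x
  have B: "(B has_integral (2 * a\<^sup>2 * integral S (\<lambda>x. (f x)\<^sup>2) + 2 * b\<^sup>2 * integral S (\<lambda>x. (g x)\<^sup>2))) S"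
    unfolding B_def
    by (intro has_integral_add has_integral_mult_right integrable_integral sq)
  have le: "(a * f x + b * g x)\<^sup>2 \<le> B x" for x
  proof -
    have "0 \<le> (a * f x - b * g x)\<^sup>2"
      by simp
    then show ?thesis
      unfolding B_def by (simp add: power2_eq_square algebra_simps)
  qed
  note [measurable] = meas
  have meas_sq: "(\<lambda>x. (a * f x + b * g x)\<^sup>2) \<in> borel_measurable (lebesgue_on S)"
    by measurable
  show int: "(\<lambda>x. (a * f x + b * g x)\<^sup>2) integrable_on S"
    using measurable_bounded_by_integrable_imp_integrable[OF meas_sq has_integral_integrable[OF B] _ S] le
    by simp
  show "integral S (\<lambda>x. (a * f x + b * g x)\<^sup>2)
           \<le> 2 * a\<^sup>2 * integral S (\<lambda>x. (f x)\<^sup>2) + 2 * b\<^sup>2 * integral S (\<lambda>x. (g x)\<^sup>2)"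
    using has_integral_le[OF integrable_integral[OF int] B le] .
qed

definition truncate_at :: "real \<Rightarrow> real \<Rightarrow> real" where
  "truncate_at N y = max (- N) (min N y)"

lemma abs_truncate_at_le: "0 \<le> N \<Longrightarrow> \<bar>truncate_at N y\<bar> \<le> N"
  by (auto simp: truncate_at_def)

lemma abs_truncate_at_diff_le: "0 \<le> N \<Longrightarrow> \<bar>truncate_at N y - y\<bar> \<le> \<bar>y\<bar>"
  by (auto simp: truncate_at_def)

lemma truncate_at_diff_tendsto: "((\<lambda>N. truncate_at N y - y) \<longlongrightarrow> 0) at_top"
proof (rule tendsto_eventually)
  show "\<forall>\<^sub>F N in at_top. truncate_at N y - y = 0"
    using eventually_ge_at_top[of "\<bar>y\<bar>"] by eventually_elim (auto simp: truncate_at_def)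
qed

locale periodic_W22 =
  fixes w w' w'' :: "real \<Rightarrow> real"
  assumes periodic: "periodic_2pi w" "periodic_2pi w'" "periodic_2pi w''"
    and weak_deriv_w: "weak_deriv w w'"
    and weak_deriv_w': "weak_deriv w' w''"
    and square_integrable_w'': "(\<lambda>x. (w'' x)\<^sup>2) integrable_on {-pi..pi}"
begin

lemma continuous_w: "continuous_on S w"
  by (rule weak_deriv_continuous_on[OF weak_deriv_w])

lemma continuous_w': "continuous_on S w'"
  by (rule weak_deriv_continuous_on[OF weak_deriv_w'])

lemma deriv_w: "deriv w = w'"
  by (rule weak_deriv_deriv_eq[OF weak_deriv_w continuous_w'])

lemma absolutely_integrable_w'': "w'' absolutely_integrable_on {a..b}"
  using weak_deriv_w' unfolding weak_deriv_def by (cases "a \<le> b") auto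

lemma measurable_w'': "w'' \<in> borel_measurable (lebesgue_on {a..b})"
  using absolutely_integrable_w'' by (simp add: absolutely_integrable_measurable)

definition trunc_error :: "real \<Rightarrow> real \<Rightarrow> real" where
  "trunc_error N x = truncate_at N (w'' x) - w'' x"

definition trunc_mean :: "real \<Rightarrow> real" where
  "trunc_mean N = integral {-pi..pi} (trunc_error N) / (2*pi)"

text \<open>Being mean-free, \<open>correction'' N\<close> has a periodic second primitive.\<close>
definition correction'' :: "real \<Rightarrow> real \<Rightarrow> real" where
  "correction'' N x = trunc_error N x - trunc_mean N"

definition correction_L1 :: "real \<Rightarrow> real" where
  "correction_L1 N = integral {-pi..pi} (\<lambda>x. \<bar>correction'' N x\<bar>)"

lemma measurable_trunc_error: "trunc_error N \<in> borel_measurable (lebesgue_on {a..b})"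
proof -
  have [measurable]: "w'' \<in> borel_measurable (lebesgue_on {a..b})"
    by (rule measurable_w'')
  show ?thesis
    unfolding trunc_error_def truncate_at_def by measurable
qed

lemma measurable_correction'': "correction'' N \<in> borel_measurable (lebesgue_on {a..b})"
proof -
  have [measurable]: "trunc_error N \<in> borel_measurable (lebesgue_on {a..b})"
    by (rule measurable_trunc_error)
  show ?thesis
    unfolding correction''_def by measurable
qed

context
  fixes N :: real
  assumes N: "0 \<le> N"
begin

lemma abs_trunc_error_le: "\<bar>trunc_error N x\<bar> \<le> \<bar>w'' x\<bar>"
  unfolding trunc_error_def by (rule abs_truncate_at_diff_le[OF N])

lemma absolutely_integrable_trunc_error: "trunc_error N absolutely_integrable_on {a..b}"
  by (rule measurable_bounded_by_integrable_imp_absolutely_integrable[where g="\<lambda>x. \<bar>w'' x\<bar>",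
        OF measurable_trunc_error])
    (use absolutely_integrable_w'' abs_trunc_error_le in \<open>auto simp: absolutely_integrable_on_def\<close>)

lemma integrable_trunc_error: "trunc_error N integrable_on {a..b}"
  and integrable_abs_trunc_error: "(\<lambda>x. \<bar>trunc_error N x\<bar>) integrable_on {a..b}"
  using absolutely_integrable_trunc_error by (simp_all add: absolutely_integrable_on_def)

lemma square_integrable_trunc_error: "(\<lambda>x. (trunc_error N x)\<^sup>2) integrable_on {-pi..pi}"
proof -
  have [measurable]: "trunc_error N \<in> borel_measurable (lebesgue_on {-pi..pi})"
    by (rule measurable_trunc_error)
  have meas: "(\<lambda>x. (trunc_error N x)\<^sup>2) \<in> borel_measurable (lebesgue_on {-pi..pi})"
    by measurable
  have "(trunc_error N x)\<^sup>2 \<le> (w'' x)\<^sup>2" for x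
    using abs_trunc_error_le[of x] by (simp add: abs_le_square_iff[symmetric])
  then show ?thesis
    using measurable_bounded_by_integrable_imp_integrable[OF meas square_integrable_w''] by simp
qed

lemma abs_trunc_mean_le: "\<bar>trunc_mean N\<bar> \<le> integral {-pi..pi} (\<lambda>x. \<bar>trunc_error N x\<bar>) / (2*pi)"
  unfolding trunc_mean_def
  using integral_norm_bound_integral[OF integrable_trunc_error integrable_abs_trunc_error]
  by (simp add: abs_divide divide_right_mono)

lemma periodic_correction'': "periodic_2pi (correction'' N)"
  using periodic(3) by (simp add: periodic_2pi_def correction''_def trunc_error_def)

lemma absolutely_integrable_correction'': "correction'' N absolutely_integrable_on {a..b}"
  unfolding correction''_def
  by (rule set_integral_diff(1)[OF absolutely_integrable_trunc_error absolutely_integrable_continuous_real])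
    simp

lemma integral_correction'': "integral {-pi..pi} (correction'' N) = 0"
  unfolding correction''_def[abs_def] trunc_mean_def
  by (subst integral_diff) (auto intro: integrable_trunc_error)

lemma correction_L1_nonneg: "0 \<le> correction_L1 N"
  unfolding correction_L1_def
  by (rule integral_nonneg)
    (use absolutely_integrable_correction'' in \<open>simp_all add: absolutely_integrable_on_def\<close>)

lemma correction_L1_le: "correction_L1 N \<le> 2 * integral {-pi..pi} (\<lambda>x. \<bar>trunc_error N x\<bar>)"
proof -
  have "correction_L1 N \<le> integral {-pi..pi} (\<lambda>x. \<bar>trunc_error N x\<bar> + \<bar>trunc_mean N\<bar>)"
    unfolding correction_L1_def correction''_def using absolutely_integrable_correction''
    by (intro integral_le integrable_add integrable_abs_trunc_error)
      (auto simp: absolutely_integrable_on_def correction''_def)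
  also have "\<dots> = integral {-pi..pi} (\<lambda>x. \<bar>trunc_error N x\<bar>) + 2 * pi * \<bar>trunc_mean N\<bar>"
    by (subst integral_add) (auto intro: integrable_abs_trunc_error)
  finally show ?thesis
    using abs_trunc_mean_le by (simp add: field_simps)
qed

lemma correction_L2_le:
  "(\<lambda>x. (correction'' N x)\<^sup>2) integrable_on {-pi..pi}"
  "integral {-pi..pi} (\<lambda>x. (correction'' N x)\<^sup>2)
     \<le> 2 * integral {-pi..pi} (\<lambda>x. (trunc_error N x)\<^sup>2) + 4 * pi * (trunc_mean N)\<^sup>2"
  using square_integrable_lincomb[where f="trunc_error N" and g="\<lambda>_. 1" and a=1 and b="- trunc_mean N",
      OF _ measurable_trunc_error borel_measurable_const square_integrable_trunc_error
      integrable_continuous_interval[OF continuous_on_const]]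
  by (simp_all add: correction''_def algebra_simps)

end

lemma trunc_error_L1_tendsto: "((\<lambda>N. integral {-pi..pi} (\<lambda>x. \<bar>trunc_error N x\<bar>)) \<longlongrightarrow> 0) at_top"
  using absolutely_integrable_w'' abs_trunc_error_le tendsto_rabs[OF truncate_at_diff_tendsto]
  by (intro integral_tendsto_zero_dominated_at_top[where h="\<lambda>x. \<bar>w'' x\<bar>"] integrable_abs_trunc_error)
    (auto simp: absolutely_integrable_on_def trunc_error_def)

lemma trunc_error_L2_tendsto: "((\<lambda>N. integral {-pi..pi} (\<lambda>x. (trunc_error N x)\<^sup>2)) \<longlongrightarrow> 0) at_top"
  using abs_trunc_error_le tendsto_power[OF truncate_at_diff_tendsto, of _ 2]
  by (intro integral_tendsto_zero_dominated_at_top[where h="\<lambda>x. (w'' x)\<^sup>2"]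
      square_integrable_trunc_error square_integrable_w'')
    (auto simp: trunc_error_def abs_le_square_iff[symmetric])

lemma trunc_mean_tendsto: "(trunc_mean \<longlongrightarrow> 0) at_top"
proof (rule Lim_null_comparison)
  show "\<forall>\<^sub>F N in at_top. norm (trunc_mean N) \<le> integral {-pi..pi} (\<lambda>x. \<bar>trunc_error N x\<bar>) / (2*pi)"
    using eventually_ge_at_top[of 0] by eventually_elim (simp add: abs_trunc_mean_le)
  show "((\<lambda>N. integral {-pi..pi} (\<lambda>x. \<bar>trunc_error N x\<bar>) / (2*pi)) \<longlongrightarrow> 0) at_top"
    using tendsto_divide[OF trunc_error_L1_tendsto tendsto_const, of "2*pi"] by simp
qed

lemma correction_L1_tendsto: "(correction_L1 \<longlongrightarrow> 0) at_top"
proof (rule Lim_null_comparison)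
  show "\<forall>\<^sub>F N in at_top. norm (correction_L1 N) \<le> 2 * integral {-pi..pi} (\<lambda>x. \<bar>trunc_error N x\<bar>)"
    using eventually_ge_at_top[of 0]
    by eventually_elim (simp add: correction_L1_le correction_L1_nonneg)
  show "((\<lambda>N. 2 * integral {-pi..pi} (\<lambda>x. \<bar>trunc_error N x\<bar>)) \<longlongrightarrow> 0) at_top"
    using tendsto_mult_right_zero[OF trunc_error_L1_tendsto] by simp
qed

lemma correction_L2_tendsto: "((\<lambda>N. integral {-pi..pi} (\<lambda>x. (correction'' N x)\<^sup>2)) \<longlongrightarrow> 0) at_top"
proof (rule Lim_null_comparison)
  show "\<forall>\<^sub>F N in at_top. norm (integral {-pi..pi} (\<lambda>x. (correction'' N x)\<^sup>2))
      \<le> 2 * integral {-pi..pi} (\<lambda>x. (trunc_error N x)\<^sup>2) + 4 * pi * (trunc_mean N)\<^sup>2"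
    using eventually_ge_at_top[of 0]
  proof eventually_elim
    case (elim N)
    have "0 \<le> integral {-pi..pi} (\<lambda>x. (correction'' N x)\<^sup>2)"
      by (rule integral_nonneg[OF correction_L2_le(1)[OF elim]]) simp
    then show ?case
      using correction_L2_le(2)[OF elim] by simp
  qed
  show "((\<lambda>N. 2 * integral {-pi..pi} (\<lambda>x. (trunc_error N x)\<^sup>2) + 4 * pi * (trunc_mean N)\<^sup>2)
      \<longlongrightarrow> 0) at_top"
  proof -
    have "((\<lambda>N. (trunc_mean N)\<^sup>2) \<longlongrightarrow> 0) at_top"
      using tendsto_power[OF trunc_mean_tendsto, of 2] by simp
    then show ?thesis
      using tendsto_add[OF tendsto_mult_right_zero[OF trunc_error_L2_tendsto]
          tendsto_mult_right_zero[of _ _ "4 * pi"]] by simp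
  qed
qed

definition v :: "real \<Rightarrow> real \<Rightarrow> real" where
  "v N t = w t + second_primitive (correction'' N) t"

definition v' :: "real \<Rightarrow> real \<Rightarrow> real" where
  "v' N t = w' t + centered_primitive (correction'' N) t"

definition v'' :: "real \<Rightarrow> real \<Rightarrow> real" where
  "v'' N t = w'' t + correction'' N t"

context
  fixes N :: real
  assumes N: "0 \<le> N"
begin

lemma weak_deriv_v: "weak_deriv (v N) (v' N)"
  unfolding v_def[abs_def] v'_def[abs_def]
  by (rule weak_deriv_add[OF weak_deriv_w weak_deriv_second_primitive[OF periodic_correction''[OF N]
        absolutely_integrable_correction''[OF N] integral_correction''[OF N]]])

lemma weak_deriv_v': "weak_deriv (v' N) (v'' N)"
  unfolding v'_def[abs_def] v''_def[abs_def]
  by (rule weak_deriv_add[OF weak_deriv_w' weak_deriv_centered_primitive[OF periodic_correction''[OF N]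
        absolutely_integrable_correction''[OF N] integral_correction''[OF N]]])

lemma continuous_v: "continuous_on S (v N)"
  and continuous_v': "continuous_on S (v' N)"
  using weak_deriv_continuous_on weak_deriv_v weak_deriv_v' by blast+

lemma periodic_v: "periodic_2pi (v N)"
  using periodic(1) periodic_second_primitive[OF periodic_correction''[OF N]
      absolutely_integrable_correction''[OF N] integral_correction''[OF N]]
  by (simp add: periodic_2pi_def v_def)

lemma periodic_v': "periodic_2pi (v' N)"
  using periodic(2) periodic_centered_primitive[OF periodic_correction''[OF N]
      absolutely_integrable_correction''[OF N] integral_correction''[OF N]]
  by (simp add: periodic_2pi_def v'_def)

lemma periodic_v'': "periodic_2pi (v'' N)"
  using periodic(3) periodic_correction''[OF N] by (simp add: periodic_2pi_def v''_def)

lemma abs_v_diff_le: "\<bar>v N t - w t\<bar> \<le> 4 * pi * correction_L1 N"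
  using abs_second_primitive_le[OF periodic_correction''[OF N]
      absolutely_integrable_correction''[OF N] integral_correction''[OF N]]
  by (simp add: v_def correction_L1_def)

lemma abs_v'_diff_le: "\<bar>v' N t - w' t\<bar> \<le> 2 * correction_L1 N"
  using abs_centered_primitive_le[OF periodic_correction''[OF N]
      absolutely_integrable_correction''[OF N] integral_correction''[OF N]]
  by (simp add: v'_def correction_L1_def)

lemma abs_v''_le: "\<bar>v'' N t\<bar> \<le> N + \<bar>trunc_mean N\<bar>"
  using abs_truncate_at_le[OF N, of "w'' t"]
  by (simp add: v''_def correction''_def trunc_error_def)

end

end

section \<open>Restoring the constraint\<close>

lemma quadratic_small_root:
  fixes a S E :: real
  assumes "0 < a" and "0 < S" and "a * E \<le> S\<^sup>2"
  defines "\<gamma> \<equiv> (sqrt (S\<^sup>2 - a * E) - S) / a"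
  shows "a * \<gamma>\<^sup>2 + 2 * S * \<gamma> + E = 0" and "\<bar>\<gamma>\<bar> \<le> \<bar>E\<bar> / S"
proof -
  define R where "R = sqrt (S\<^sup>2 - a * E)"
  have "0 \<le> R" and R2: "R\<^sup>2 = S\<^sup>2 - a * E"
    using assms(3) by (simp_all add: R_def)
  have a\<gamma>: "a * \<gamma> = R - S"
    using \<open>0 < a\<close> by (simp add: \<gamma>_def R_def)
  have "a * (a * \<gamma>\<^sup>2 + 2 * S * \<gamma> + E) = (a * \<gamma>)\<^sup>2 + 2 * S * (a * \<gamma>) + a * E"
    by (simp add: power2_eq_square algebra_simps)
  also have "\<dots> = 0"
    unfolding a\<gamma> using R2 by (simp add: power2_eq_square algebra_simps)
  finally show "a * \<gamma>\<^sup>2 + 2 * S * \<gamma> + E = 0"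
    using \<open>0 < a\<close> by simp
  have "\<bar>a * \<gamma>\<bar> * (R + S) = a * \<bar>E\<bar>"
  proof -
    have "0 < R + S"
      using \<open>0 \<le> R\<close> \<open>0 < S\<close> by simp
    then have "\<bar>a * \<gamma>\<bar> * (R + S) = \<bar>(R - S) * (R + S)\<bar>"
      unfolding a\<gamma> by (simp add: abs_mult)
    also have "(R - S) * (R + S) = - (a * E)"
      using R2 by (simp add: power2_eq_square algebra_simps)
    finally show ?thesis
      using \<open>0 < a\<close> by (simp add: abs_mult)
  qed
  moreover have "\<bar>a * \<gamma>\<bar> * S \<le> \<bar>a * \<gamma>\<bar> * (R + S)"
    using \<open>0 \<le> R\<close> by (simp add: mult_left_mono)
  ultimately have "a * (\<bar>\<gamma>\<bar> * S) \<le> a * \<bar>E\<bar>"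
    using \<open>0 < a\<close> by (simp add: abs_mult mult.assoc)
  then show "\<bar>\<gamma>\<bar> \<le> \<bar>E\<bar> / S"
    using \<open>0 < a\<close> \<open>0 < S\<close> by (simp add: pos_le_divide_eq)
qed

lemma abs_square_diff_le:
  fixes a h A H :: real
  assumes "\<bar>a\<bar> \<le> A" and "\<bar>h\<bar> \<le> H"
  shows "\<bar>(a + h)\<^sup>2 - a\<^sup>2\<bar> \<le> 2 * A * H + H\<^sup>2"
proof -
  have "\<bar>(a + h)\<^sup>2 - a\<^sup>2\<bar> = \<bar>2 * a * h + h\<^sup>2\<bar>"
    by (simp add: power2_eq_square algebra_simps)
  also have "\<dots> \<le> 2 * \<bar>a\<bar> * \<bar>h\<bar> + \<bar>h\<bar>\<^sup>2"
    using abs_triangle_ineq[of "2 * a * h" "h\<^sup>2"] by (simp add: abs_mult)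
  also have "\<dots> \<le> 2 * A * H + H\<^sup>2"
    using assms by (intro add_mono mult_mono power_mono) auto
  finally show ?thesis .
qed

lemma W22_norm_nonneg: "0 \<le> W22_norm f"
proof -
  let ?g = "\<lambda>x. (f x)\<^sup>2 + (deriv f x)\<^sup>2 + (wderiv2 f x)\<^sup>2"
  have "0 \<le> integral {-pi..pi} ?g"
    by (cases "?g integrable_on {-pi..pi}") (simp_all add: integral_nonneg not_integrable_integral)
  then show ?thesis
    by (simp add: W22_norm_def)
qed

lemma W22_norm_le:
  assumes f: "weak_deriv f f'" and f': "weak_deriv f' f''"
    and B0: "\<And>x. \<bar>f x\<bar> \<le> B0" and B1: "\<And>x. \<bar>f' x\<bar> \<le> B1"
    and f''_sq: "(\<lambda>x. (f'' x)\<^sup>2) integrable_on {-pi..pi}"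
  shows "W22_norm f \<le> sqrt (2*pi*B0\<^sup>2 + 2*pi*B1\<^sup>2 + integral {-pi..pi} (\<lambda>x. (f'' x)\<^sup>2))"
proof -
  have cont: "continuous_on S f" "continuous_on S f'" for S
    using weak_deriv_continuous_on f f' by blast+
  have deriv: "deriv f = f'"
    by (rule weak_deriv_deriv_eq[OF f cont(2)])
  have "weak_deriv f' (wderiv2 f)"
    unfolding wderiv2_def deriv by (rule someI[of _ f'']) (rule f')
  then have "negligible {x. wderiv2 f x \<noteq> f'' x}"
    by (rule weak_deriv_unique[OF _ f'])
  then have "integral {-pi..pi} (\<lambda>x. (f x)\<^sup>2 + (deriv f x)\<^sup>2 + (wderiv2 f x)\<^sup>2)
      = integral {-pi..pi} (\<lambda>x. ((f x)\<^sup>2 + (f' x)\<^sup>2) + (f'' x)\<^sup>2)"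
    by (intro integral_spike[of "{x. wderiv2 f x \<noteq> f'' x}"]) (auto simp: deriv)
  also have "\<dots> = integral {-pi..pi} (\<lambda>x. (f x)\<^sup>2 + (f' x)\<^sup>2) + integral {-pi..pi} (\<lambda>x. (f'' x)\<^sup>2)"
    by (intro integral_add f''_sq integrable_continuous_interval continuous_intros cont)
  also have "\<dots> \<le> integral {-pi..pi} (\<lambda>x. B0\<^sup>2 + B1\<^sup>2) + integral {-pi..pi} (\<lambda>x. (f'' x)\<^sup>2)"
  proof (intro add_right_mono integral_le integrable_continuous_interval continuous_intros cont add_mono)
    show "(f x)\<^sup>2 \<le> B0\<^sup>2" "(f' x)\<^sup>2 \<le> B1\<^sup>2" for x
      using power_mono[OF B0[of x] abs_ge_zero, of 2] power_mono[OF B1[of x] abs_ge_zero, of 2]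
      by simp_all
  qed
  finally show ?thesis
    unfolding W22_norm_def by (simp add: algebra_simps)
qed

locale constrained_W22 = periodic_W22 +
  assumes w_ge_1: "\<And>t. 1 \<le> w t"
    and constraint: "integral {-pi..pi} (\<lambda>t. (w t)\<^sup>2 - (w' t)\<^sup>2) = 0"
begin

definition integral_v :: "real \<Rightarrow> real" where
  "integral_v N = integral {-pi..pi} (v N)"

definition defect :: "real \<Rightarrow> real" where
  "defect N = integral {-pi..pi} (\<lambda>t. (v N t)\<^sup>2 - (v' N t)\<^sup>2)"

definition shift :: "real \<Rightarrow> real" where
  "shift N = (sqrt ((integral_v N)\<^sup>2 - 2 * pi * defect N) - integral_v N) / (2 * pi)"

definition slack :: "real \<Rightarrow> real" where
  "slack N = 4 * pi * correction_L1 N + \<bar>shift N\<bar>"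

definition scale :: "real \<Rightarrow> real" where
  "scale N = 1 / (1 - slack N)"

definition u :: "real \<Rightarrow> real \<Rightarrow> real" where
  "u N t = scale N * (v N t + shift N)"

definition u' :: "real \<Rightarrow> real \<Rightarrow> real" where
  "u' N t = scale N * v' N t"

definition u'' :: "real \<Rightarrow> real \<Rightarrow> real" where
  "u'' N t = scale N * v'' N t"

definition good_level :: "real \<Rightarrow> bool" where
  "good_level N \<longleftrightarrow> 0 \<le> N \<and> \<bar>defect N\<bar> \<le> pi / 8 \<and> slack N \<le> 1 / 2"

lemma integral_v_ge_pi:
  assumes "0 \<le> N" and "4 * pi * correction_L1 N \<le> 1 / 2"
  shows "pi \<le> integral_v N"
proof -
  have "integral {-pi..pi} (\<lambda>t. 1 / 2) \<le> integral_v N"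
    unfolding integral_v_def
  proof (rule integral_le)
    show "v N integrable_on {-pi..pi}"
      by (rule integrable_continuous_interval[OF continuous_v[OF assms(1)]])
    show "1 / 2 \<le> v N t" for t
      using w_ge_1[of t] abs_v_diff_le[OF assms(1), of t] assms(2) by (simp add: abs_le_iff)
  qed (rule integrable_const_ivl)
  then show ?thesis
    by simp
qed

lemma shift_root:
  assumes "0 \<le> N" and "4 * pi * correction_L1 N \<le> 1 / 2" and "\<bar>defect N\<bar> \<le> pi / 8"
  shows "2 * pi * (shift N)\<^sup>2 + 2 * integral_v N * shift N + defect N = 0"
    and "\<bar>shift N\<bar> \<le> \<bar>defect N\<bar> / pi"
proof -
  have ge_pi: "pi \<le> integral_v N"
    by (rule integral_v_ge_pi[OF assms(1,2)])
  have "2 * pi * defect N \<le> 2 * pi * (pi / 8)"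
    using assms(3) by (intro mult_left_mono) auto
  also have "\<dots> \<le> (integral_v N)\<^sup>2"
  proof -
    have "0 \<le> integral_v N"
      using ge_pi pi_gt_zero by linarith
    then have "pi * pi \<le> integral_v N * integral_v N" "0 \<le> pi * pi" "2 * pi * (pi / 8) = pi * pi / 4"
      using mult_mono[OF ge_pi ge_pi] pi_gt_zero by auto
    then show ?thesis
      unfolding power2_eq_square by linarith
  qed
  finally have disc: "2 * pi * defect N \<le> (integral_v N)\<^sup>2" .
  show "2 * pi * (shift N)\<^sup>2 + 2 * integral_v N * shift N + defect N = 0"
    using quadratic_small_root(1)[OF _ _ disc] ge_pi pi_gt_zero by (simp add: shift_def)
  have "\<bar>shift N\<bar> \<le> \<bar>defect N\<bar> / integral_v N"
    using quadratic_small_root(2)[OF _ _ disc] ge_pi pi_gt_zero by (simp add: shift_def)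
  also have "\<dots> \<le> \<bar>defect N\<bar> / pi"
  proof (rule divide_left_mono)
    show "0 < integral_v N * pi"
      using ge_pi pi_gt_zero by (intro mult_pos_pos) linarith+
  qed (use ge_pi in auto)
  finally show "\<bar>shift N\<bar> \<le> \<bar>defect N\<bar> / pi" .
qed

lemma abs_defect_le:
  assumes N: "0 \<le> N"
    and b0: "\<And>t. \<bar>(v N t)\<^sup>2 - (w t)\<^sup>2\<bar> \<le> b0" and b1: "\<And>t. \<bar>(v' N t)\<^sup>2 - (w' t)\<^sup>2\<bar> \<le> b1"
  shows "\<bar>defect N\<bar> \<le> 2 * pi * (b0 + b1)"
proof -
  let ?d = "\<lambda>t. ((v N t)\<^sup>2 - (w t)\<^sup>2) - ((v' N t)\<^sup>2 - (w' t)\<^sup>2)"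
  have cont: "continuous_on {-pi..pi} ?d"
    by (intro continuous_intros continuous_v[OF N] continuous_v'[OF N] continuous_w continuous_w')
  have "(\<lambda>t. (v N t)\<^sup>2 - (v' N t)\<^sup>2) integrable_on {-pi..pi}"
    and "(\<lambda>t. (w t)\<^sup>2 - (w' t)\<^sup>2) integrable_on {-pi..pi}"
    by (intro integrable_continuous_interval continuous_intros continuous_v[OF N] continuous_v'[OF N]
        continuous_w continuous_w')+
  then have "defect N = integral {-pi..pi} (\<lambda>t. ((v N t)\<^sup>2 - (v' N t)\<^sup>2) - ((w t)\<^sup>2 - (w' t)\<^sup>2))"
    unfolding defect_def by (simp add: integral_diff constraint)
  also have "\<dots> = integral {-pi..pi} ?d"
    by (simp add: algebra_simps)
  finally have "defect N = integral {-pi..pi} ?d" .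
  moreover have "norm (integral {-pi..pi} ?d) \<le> (b0 + b1) * (pi - - pi)"
  proof (rule integral_bound[OF _ cont])
    show "norm (?d t) \<le> b0 + b1" for t
      using abs_triangle_ineq4[of "(v N t)\<^sup>2 - (w t)\<^sup>2" "(v' N t)\<^sup>2 - (w' t)\<^sup>2"] b0[of t] b1[of t]
      by simp
  qed simp
  ultimately show ?thesis
    by (simp add: algebra_simps)
qed

lemma defect_tendsto: "(defect \<longlongrightarrow> 0) at_top"
proof -
  obtain W where W: "\<And>t. \<bar>w t\<bar> \<le> W"
    using periodic_2pi_bounded[OF periodic(1) continuous_w] by blast
  obtain W1 where W1: "\<And>t. \<bar>w' t\<bar> \<le> W1"
    using periodic_2pi_bounded[OF periodic(2) continuous_w'] by blast
  define bound where "bound N = 2 * pi * ((2 * W * (4 * pi * correction_L1 N) + (4 * pi * correction_L1 N)\<^sup>2)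
      + (2 * W1 * (2 * correction_L1 N) + (2 * correction_L1 N)\<^sup>2))" for N
  show ?thesis
  proof (rule Lim_null_comparison)
    show "\<forall>\<^sub>F N in at_top. norm (defect N) \<le> bound N"
      using eventually_ge_at_top[of "0::real"]
    proof eventually_elim
      case (elim N)
      have "\<bar>(v N t)\<^sup>2 - (w t)\<^sup>2\<bar> \<le> 2 * W * (4 * pi * correction_L1 N) + (4 * pi * correction_L1 N)\<^sup>2"
        and "\<bar>(v' N t)\<^sup>2 - (w' t)\<^sup>2\<bar> \<le> 2 * W1 * (2 * correction_L1 N) + (2 * correction_L1 N)\<^sup>2" for t
        using abs_square_diff_le[OF W[of t] abs_v_diff_le[OF elim, of t]]
          abs_square_diff_le[OF W1[of t] abs_v'_diff_le[OF elim, of t]] by simp_all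
      then show ?case
        unfolding real_norm_def bound_def by (rule abs_defect_le[OF elim])
    qed
    show "(bound \<longlongrightarrow> 0) at_top"
      unfolding bound_def[abs_def] by (rule tendsto_eq_intros correction_L1_tendsto refl)+ simp
  qed
qed

lemma eventually_root_conditions:
  "\<forall>\<^sub>F N in at_top. 0 \<le> N \<and> 4 * pi * correction_L1 N \<le> 1 / 2 \<and> \<bar>defect N\<bar> \<le> pi / 8"
proof -
  have "\<forall>\<^sub>F N in at_top. correction_L1 N < 1 / (8 * pi)"
    using order_tendstoD(2)[OF correction_L1_tendsto] by simp
  moreover have "\<forall>\<^sub>F N in at_top. \<bar>defect N\<bar> < pi / 8"
    using order_tendstoD(2)[OF tendsto_rabs[OF defect_tendsto], of "pi / 8"] by simp
  ultimately show ?thesis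
    using eventually_ge_at_top[of 0]
    by eventually_elim (auto simp: field_simps)
qed

lemma shift_tendsto: "(shift \<longlongrightarrow> 0) at_top"
proof (rule Lim_null_comparison)
  show "\<forall>\<^sub>F N in at_top. norm (shift N) \<le> \<bar>defect N\<bar> / pi"
    using eventually_root_conditions by eventually_elim (simp add: shift_root(2))
  show "((\<lambda>N. \<bar>defect N\<bar> / pi) \<longlongrightarrow> 0) at_top"
    using tendsto_divide[OF tendsto_rabs[OF defect_tendsto] tendsto_const, of pi] by simp
qed

lemma slack_tendsto: "(slack \<longlongrightarrow> 0) at_top"
  unfolding slack_def[abs_def]
  using tendsto_add[OF tendsto_mult_right_zero[OF correction_L1_tendsto] tendsto_rabs[OF shift_tendsto]]
  by simp

lemma scale_tendsto: "(scale \<longlongrightarrow> 1) at_top"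
  unfolding scale_def[abs_def]
  using tendsto_divide[OF tendsto_const tendsto_diff[OF tendsto_const slack_tendsto], of 1 1]
  by simp

lemma eventually_good_level: "eventually good_level at_top"
proof -
  have "\<forall>\<^sub>F N in at_top. slack N < 1 / 2"
    using order_tendstoD(2)[OF slack_tendsto, of "1 / 2"] by simp
  with eventually_root_conditions show ?thesis
    by eventually_elim (simp add: good_level_def)
qed

context
  fixes N :: real
  assumes good_level: "good_level N"
begin

lemma good_level_nonneg: "0 \<le> N"
  and good_level_correction_L1: "4 * pi * correction_L1 N \<le> 1 / 2"
  and good_level_defect: "\<bar>defect N\<bar> \<le> pi / 8"
  and good_level_slack: "slack N \<le> 1 / 2"
  using good_level by (auto simp: good_level_def slack_def)

lemma scale_ge_1: "1 \<le> scale N"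
  and scale_slack: "scale N * (1 - slack N) = 1"
proof -
  have "0 \<le> slack N"
    using correction_L1_nonneg[OF good_level_nonneg] by (simp add: slack_def)
  then show "1 \<le> scale N" "scale N * (1 - slack N) = 1"
    using good_level_slack by (simp_all add: scale_def field_simps)
qed

lemma weak_deriv_u: "weak_deriv (u N) (u' N)"
  unfolding u_def[abs_def] u'_def[abs_def]
  by (intro weak_deriv_cmult weak_deriv_add_const weak_deriv_v good_level_nonneg)

lemma weak_deriv_u': "weak_deriv (u' N) (u'' N)"
  unfolding u'_def[abs_def] u''_def[abs_def]
  by (intro weak_deriv_cmult weak_deriv_v' good_level_nonneg)

lemma continuous_u': "continuous_on S (u' N)"
  by (rule weak_deriv_continuous_on[OF weak_deriv_u'])

lemma deriv_u: "deriv (u N) = u' N"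
  by (rule weak_deriv_deriv_eq[OF weak_deriv_u continuous_u'])

lemma W2inf_S1_u: "W2inf_S1 (u N)"
  unfolding W2inf_S1_def
proof (intro conjI exI)
  show "periodic_2pi (u N)" "periodic_2pi (u' N)" "periodic_2pi (u'' N)"
    using periodic_v[OF good_level_nonneg] periodic_v'[OF good_level_nonneg] periodic_v''[OF good_level_nonneg]
    by (simp_all add: periodic_2pi_def u_def u'_def u''_def)
  show "\<forall>t. \<bar>u'' N t\<bar> \<le> scale N * (N + \<bar>trunc_mean N\<bar>)"
    using abs_v''_le[OF good_level_nonneg] scale_ge_1 by (simp add: u''_def abs_mult mult_left_mono)
qed (fact weak_deriv_u weak_deriv_u')+

lemma u_ge_1: "1 \<le> u N t"
proof -
  have "1 - slack N \<le> v N t + shift N"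
    using w_ge_1[of t] abs_v_diff_le[OF good_level_nonneg, of t] abs_ge_minus_self[of "shift N"]
    unfolding slack_def abs_le_iff by linarith
  then have "scale N * (1 - slack N) \<le> scale N * (v N t + shift N)"
    using scale_ge_1 by (intro mult_left_mono) auto
  then show ?thesis
    using scale_slack by (simp add: u_def)
qed

lemma constraint_u: "integral {-pi..pi} (\<lambda>t. (u N t)\<^sup>2 - (deriv (u N) t)\<^sup>2) = 0"
proof -
  have cont: "continuous_on {-pi..pi} (v N)" "continuous_on {-pi..pi} (v' N)"
    using continuous_v continuous_v' good_level_nonneg by blast+
  have eq: "(u N t)\<^sup>2 - (deriv (u N) t)\<^sup>2
      = (scale N)\<^sup>2 * (((v N t)\<^sup>2 - (v' N t)\<^sup>2) + 2 * shift N * v N t + (shift N)\<^sup>2)" for t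
    by (simp add: deriv_u u_def u'_def power2_eq_square algebra_simps)
  have F1: "((\<lambda>t. (v N t)\<^sup>2 - (v' N t)\<^sup>2) has_integral defect N) {-pi..pi}"
    unfolding defect_def using cont
    by (intro integrable_integral integrable_continuous_interval continuous_intros)
  have F2: "((\<lambda>t. 2 * shift N * v N t) has_integral (2 * shift N * integral_v N)) {-pi..pi}"
    unfolding integral_v_def using cont
    by (intro has_integral_mult_right integrable_integral integrable_continuous_interval)
  have F3: "((\<lambda>t. (shift N)\<^sup>2) has_integral (2 * pi * (shift N)\<^sup>2)) {-pi..pi}"
    using has_integral_const_real[of "(shift N)\<^sup>2" "-pi" pi] by (simp add: algebra_simps)
  have "((\<lambda>t. (u N t)\<^sup>2 - (deriv (u N) t)\<^sup>2) has_integral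
      (scale N)\<^sup>2 * (defect N + 2 * shift N * integral_v N + 2 * pi * (shift N)\<^sup>2)) {-pi..pi}"
    unfolding eq by (rule has_integral_mult_right[OF has_integral_add[OF has_integral_add[OF F1 F2] F3]])
  moreover have "defect N + 2 * shift N * integral_v N + 2 * pi * (shift N)\<^sup>2 = 0"
    using shift_root(1)[OF good_level_nonneg good_level_correction_L1 good_level_defect] by (simp add: algebra_simps)
  ultimately show ?thesis
    by (simp add: integral_unique)
qed

lemma abs_u_diff_le:
  assumes "\<And>t. \<bar>w t\<bar> \<le> W"
  shows "\<bar>u N t - w t\<bar> \<le> (scale N - 1) * W + scale N * slack N"
proof -
  have "\<bar>u N t - w t\<bar> = \<bar>(scale N - 1) * w t + scale N * ((v N t - w t) + shift N)\<bar>"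
    by (simp add: u_def algebra_simps)
  also have "\<dots> \<le> \<bar>(scale N - 1) * w t\<bar> + \<bar>scale N * ((v N t - w t) + shift N)\<bar>"
    by (rule abs_triangle_ineq)
  also have "\<dots> \<le> (scale N - 1) * W + scale N * slack N"
  proof (rule add_mono)
    show "\<bar>(scale N - 1) * w t\<bar> \<le> (scale N - 1) * W"
      using scale_ge_1 assms[of t] by (simp add: abs_mult mult_left_mono)
    have "\<bar>(v N t - w t) + shift N\<bar> \<le> slack N"
      using abs_v_diff_le[OF good_level_nonneg, of t] abs_triangle_ineq[of "v N t - w t" "shift N"]
      unfolding slack_def by linarith
    then show "\<bar>scale N * ((v N t - w t) + shift N)\<bar> \<le> scale N * slack N"
      using scale_ge_1 by (simp add: abs_mult mult_left_mono)
  qed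
  finally show ?thesis .
qed

lemma abs_u'_diff_le:
  assumes "\<And>t. \<bar>w' t\<bar> \<le> W1"
  shows "\<bar>u' N t - w' t\<bar> \<le> (scale N - 1) * W1 + scale N * (2 * correction_L1 N)"
proof -
  have "\<bar>u' N t - w' t\<bar> = \<bar>(scale N - 1) * w' t + scale N * (v' N t - w' t)\<bar>"
    by (simp add: u'_def algebra_simps)
  also have "\<dots> \<le> \<bar>(scale N - 1) * w' t\<bar> + \<bar>scale N * (v' N t - w' t)\<bar>"
    by (rule abs_triangle_ineq)
  also have "\<dots> \<le> (scale N - 1) * W1 + scale N * (2 * correction_L1 N)"
    using scale_ge_1 assms[of t] abs_v'_diff_le[OF good_level_nonneg, of t]
    by (intro add_mono) (simp_all add: abs_mult mult_left_mono)
  finally show ?thesis .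
qed

lemma square_integrable_u''_diff: "(\<lambda>t. (u'' N t - w'' t)\<^sup>2) integrable_on {-pi..pi}"
  and integral_u''_diff_le: "integral {-pi..pi} (\<lambda>t. (u'' N t - w'' t)\<^sup>2)
      \<le> 2 * (scale N - 1)\<^sup>2 * integral {-pi..pi} (\<lambda>x. (w'' x)\<^sup>2)
        + 2 * (scale N)\<^sup>2 * integral {-pi..pi} (\<lambda>x. (correction'' N x)\<^sup>2)"
proof -
  have "(\<lambda>t. (u'' N t - w'' t)\<^sup>2) = (\<lambda>t. ((scale N - 1) * w'' t + scale N * correction'' N t)\<^sup>2)"
    by (rule ext) (simp add: u''_def v''_def algebra_simps)
  then show "(\<lambda>t. (u'' N t - w'' t)\<^sup>2) integrable_on {-pi..pi}"
    "integral {-pi..pi} (\<lambda>t. (u'' N t - w'' t)\<^sup>2)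
      \<le> 2 * (scale N - 1)\<^sup>2 * integral {-pi..pi} (\<lambda>x. (w'' x)\<^sup>2)
        + 2 * (scale N)\<^sup>2 * integral {-pi..pi} (\<lambda>x. (correction'' N x)\<^sup>2)"
    using square_integrable_lincomb[OF _ measurable_w'' measurable_correction'' square_integrable_w''
        correction_L2_le(1)[OF good_level_nonneg]] by simp_all
qed

lemma W22_norm_u_diff_le:
  assumes W: "\<And>t. \<bar>w t\<bar> \<le> W" and W1: "\<And>t. \<bar>w' t\<bar> \<le> W1"
  shows "W22_norm (\<lambda>t. u N t - w t)
    \<le> sqrt (2 * pi * ((scale N - 1) * W + scale N * slack N)\<^sup>2
        + 2 * pi * ((scale N - 1) * W1 + scale N * (2 * correction_L1 N))\<^sup>2
        + (2 * (scale N - 1)\<^sup>2 * integral {-pi..pi} (\<lambda>x. (w'' x)\<^sup>2)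
           + 2 * (scale N)\<^sup>2 * integral {-pi..pi} (\<lambda>x. (correction'' N x)\<^sup>2)))"
proof -
  have "W22_norm (\<lambda>t. u N t - w t)
      \<le> sqrt (2 * pi * ((scale N - 1) * W + scale N * slack N)\<^sup>2
        + 2 * pi * ((scale N - 1) * W1 + scale N * (2 * correction_L1 N))\<^sup>2
        + integral {-pi..pi} (\<lambda>t. (u'' N t - w'' t)\<^sup>2))"
    by (rule W22_norm_le[OF weak_deriv_diff[OF weak_deriv_u weak_deriv_w]
          weak_deriv_diff[OF weak_deriv_u' weak_deriv_w']
          abs_u_diff_le[OF W] abs_u'_diff_le[OF W1] square_integrable_u''_diff])
  also have "\<dots> \<le> sqrt (2 * pi * ((scale N - 1) * W + scale N * slack N)\<^sup>2
        + 2 * pi * ((scale N - 1) * W1 + scale N * (2 * correction_L1 N))\<^sup>2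
        + (2 * (scale N - 1)\<^sup>2 * integral {-pi..pi} (\<lambda>x. (w'' x)\<^sup>2)
           + 2 * (scale N)\<^sup>2 * integral {-pi..pi} (\<lambda>x. (correction'' N x)\<^sup>2)))"
    using integral_u''_diff_le by simp
  finally show ?thesis .
qed

end

lemma W22_norm_u_diff_tendsto: "((\<lambda>N. W22_norm (\<lambda>t. u N t - w t)) \<longlongrightarrow> 0) at_top"
proof -
  obtain W where W: "\<And>t. \<bar>w t\<bar> \<le> W"
    using periodic_2pi_bounded[OF periodic(1) continuous_w] by blast
  obtain W1 where W1: "\<And>t. \<bar>w' t\<bar> \<le> W1"
    using periodic_2pi_bounded[OF periodic(2) continuous_w'] by blast
  define bound where "bound N = sqrt (2 * pi * ((scale N - 1) * W + scale N * slack N)\<^sup>2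
      + 2 * pi * ((scale N - 1) * W1 + scale N * (2 * correction_L1 N))\<^sup>2
      + (2 * (scale N - 1)\<^sup>2 * integral {-pi..pi} (\<lambda>x. (w'' x)\<^sup>2)
         + 2 * (scale N)\<^sup>2 * integral {-pi..pi} (\<lambda>x. (correction'' N x)\<^sup>2)))" for N
  show ?thesis
  proof (rule Lim_null_comparison)
    show "\<forall>\<^sub>F N in at_top. norm (W22_norm (\<lambda>t. u N t - w t)) \<le> bound N"
      using eventually_good_level
    proof eventually_elim
      case (elim N)
      show ?case
        unfolding real_norm_def abs_of_nonneg[OF W22_norm_nonneg] bound_def
        by (rule W22_norm_u_diff_le[OF elim W W1])
    qed
    have "(bound \<longlongrightarrow> sqrt (2 * pi * ((1 - 1) * W + 1 * 0)\<^sup>2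
        + 2 * pi * ((1 - 1) * W1 + 1 * (2 * 0))\<^sup>2
        + (2 * (1 - 1)\<^sup>2 * integral {-pi..pi} (\<lambda>x. (w'' x)\<^sup>2) + 2 * 1\<^sup>2 * 0))) at_top"
      unfolding bound_def[abs_def]
      by (intro tendsto_intros scale_tendsto slack_tendsto correction_L1_tendsto correction_L2_tendsto)
    then show "(bound \<longlongrightarrow> 0) at_top"
      by simp
  qed
qed

end

theorem lemma3:
  fixes w :: "real \<Rightarrow> real"
  assumes "W22_S1 w"
    and "\<forall>t. w t \<ge> 1"
    and "integral {-pi..pi} (\<lambda>t. (w t)\<^sup>2 - (deriv w t)\<^sup>2) = 0"
  shows "\<exists>we :: real \<Rightarrow> real \<Rightarrow> real.
           (\<forall>\<epsilon>>0. W2inf_S1 (we \<epsilon>) \<and> (\<forall>t. we \<epsilon> t \<ge> 1) \<and>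
                   integral {-pi..pi} (\<lambda>t. (we \<epsilon> t)\<^sup>2 - (deriv (we \<epsilon>) t)\<^sup>2) = 0) \<and>
           ((\<lambda>\<epsilon>. W22_norm (\<lambda>t. we \<epsilon> t - w t)) \<longlongrightarrow> 0) (at_right 0)"
proof -
  obtain w' w'' where W22: "periodic_W22 w w' w''"
    using assms(1) unfolding W22_S1_def periodic_W22_def by blast
  then interpret constrained_W22 w w' w''
    using assms(2,3) periodic_W22.deriv_w[OF W22]
    by (simp add: constrained_W22_def constrained_W22_axioms_def)
  obtain N0 where N0: "\<And>N. N0 \<le> N \<Longrightarrow> good_level N"
    using eventually_good_level unfolding eventually_at_top_linorder by blast
  define level where "level \<epsilon> = max (inverse \<epsilon>) N0" for \<epsilon> :: real
  have "filterlim level at_top (at_right 0)"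
    unfolding level_def by (rule filterlim_at_top_mono[OF filterlim_inverse_at_top_right]) simp
  then have "((\<lambda>\<epsilon>. W22_norm (\<lambda>t. u (level \<epsilon>) t - w t)) \<longlongrightarrow> 0) (at_right 0)"
    by (rule filterlim_compose[OF W22_norm_u_diff_tendsto])
  moreover have "good_level (level \<epsilon>)" for \<epsilon>
    by (rule N0) (simp add: level_def)
  ultimately show ?thesis
    using W2inf_S1_u u_ge_1 constraint_u by (intro exI[of _ "\<lambda>\<epsilon>. u (level \<epsilon>)"]) auto
qed

end
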